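(* Let $p,r$ be positive integers and $s=p+2r$. Let $\Phi:U_{ps}(\mathbb{R})\to\mathbb{C}^{r\times p}$ be the map $\Phi(X)=WA^{-1}$, where for $X=(X_0;X_1;X_2;X_3)$ (blocks of $p,p,r,r$ rows) $A=X_0-X_1$ and $W=X_2+iX_3$. Then the complex valued components of $\Phi$ form an orthogonal harmonic family of $\mathbf{GL}_p(\mathbb{R})$-invariant functions on $U_{ps}(\mathbb{R})$, equipped with the semi-Euclidean metric.
   Context: $U_{ps}(\mathbb{R})=\{X\in\mathbb{R}^{(p+s)\times p}: -X_0^tX_0+X_1^tX_1+X_2^tX_2+X_3^tX_3 \text{ is negative definite}\}$; on it $A$ is invertible. $\mathbf{GL}_p(\mathbb{R})$ acts by right multiplication. The semi-Euclidean metric is $(X,Y)=\mathrm{trace}(X^t\mathrm{diag}(-I_p,I_s)Y)$. For a semi-Riemannian manifold $(M,g)$ and complex functions $\phi,\psi$, $\tau(\phi)$ is the Laplace–Beltrami operator (extended complex-linearly) and $\kappa(\phi,\psi)=g(\mathrm{grad}\,\phi,\mathrm{grad}\,\psi)$ with $g$ extended complex-bilinearly. A set $\Omega$ of complex functions is an orthogonal harmonic family if $\tau(\phi)=0$ and $\kappa(\phi,\psi)=0$ for all $\phi,\psi\in\Omega$. *)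

theory Defs
  imports "HOL-Analysis.Analysis"
begin

text \<open>Matrices X in R^((p+s) x p), s = p + 2r, are modelled as real^'p^'row with
  row index type 'row = ('p + 'p) + ('r + 'r): the row blocks X0, X1, X2, X3 are
  the rows Inl (Inl i), Inl (Inr i), Inr (Inl k), Inr (Inr k).  p = CARD('p), r = CARD('r).\<close>

type_synonym ('p, 'r) rowidx = "('p + 'p) + ('r + 'r)"
type_synonym ('p, 'r) mat = "real ^ 'p ^ ('p, 'r) rowidx"

definition blk0 :: "('p::finite, 'r::finite) mat \<Rightarrow> real ^ 'p ^ 'p" where
  "blk0 X = (\<chi> i j. X $ Inl (Inl i) $ j)"
definition blk1 :: "('p::finite, 'r::finite) mat \<Rightarrow> real ^ 'p ^ 'p" where
  "blk1 X = (\<chi> i j. X $ Inl (Inr i) $ j)"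
definition blk2 :: "('p::finite, 'r::finite) mat \<Rightarrow> real ^ 'p ^ 'r" where
  "blk2 X = (\<chi> k j. X $ Inr (Inl k) $ j)"
definition blk3 :: "('p::finite, 'r::finite) mat \<Rightarrow> real ^ 'p ^ 'r" where
  "blk3 X = (\<chi> k j. X $ Inr (Inr k) $ j)"

definition neg_def :: "real ^ 'n ^ 'n \<Rightarrow> bool" where
  "neg_def M \<longleftrightarrow> (\<forall>v::real^'n. v \<noteq> 0 \<longrightarrow> v \<bullet> (M *v v) < 0)"

definition U_ps :: "('p::finite, 'r::finite) mat set" where
  "U_ps = {X. neg_def (- (transpose (blk0 X) ** blk0 X) + transpose (blk1 X) ** blk1 X
                       + transpose (blk2 X) ** blk2 X + transpose (blk3 X) ** blk3 X)}"

definition Phi :: "('p::finite, 'r::finite) mat \<Rightarrow> 'r \<Rightarrow> 'p \<Rightarrow> complex" where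
  "Phi X k l = (let A = blk0 X - blk1 X; Ai = matrix_inv A in
     (\<Sum>m\<in>UNIV. (complex_of_real (blk2 X $ k $ m) + \<i> * complex_of_real (blk3 X $ k $ m))
                 * complex_of_real (Ai $ m $ l)))"

text \<open>Semi-Euclidean metric (X,Y) = trace(X^t diag(-I_p, I_s) Y): the coordinate
  X_{a j} has sign -1 if row a lies in the first block, +1 otherwise.  The
  coordinates X_{a j} are orthonormal for this flat metric.\<close>
definition sgn_row :: "('p, 'r) rowidx \<Rightarrow> real" where
  "sgn_row a = (case a of Inl (Inl _) \<Rightarrow> -1 | _ \<Rightarrow> 1)"

definition semi_eucl :: "('p::finite, 'r::finite) mat \<Rightarrow> ('p, 'r) mat \<Rightarrow> real" where
  "semi_eucl X Y = (\<Sum>a\<in>UNIV. \<Sum>j\<in>UNIV. sgn_row a * X $ a $ j * Y $ a $ j)"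

definition unitmat :: "'m \<Rightarrow> 'c \<Rightarrow> real ^ 'c ^ 'm" where
  "unitmat a j = (\<chi> b c. if b = a \<and> c = j then 1 else 0)"

definition pd :: "'m::finite \<Rightarrow> 'c::finite \<Rightarrow> (real ^ 'c ^ 'm \<Rightarrow> complex) \<Rightarrow> real ^ 'c ^ 'm \<Rightarrow> complex" where
  "pd a j f X = vector_derivative (\<lambda>t. f (X + t *\<^sub>R unitmat a j)) (at 0)"

definition tau :: "(('p::finite, 'r::finite) mat \<Rightarrow> complex) \<Rightarrow> ('p, 'r) mat \<Rightarrow> complex" where
  "tau f X = (\<Sum>a\<in>UNIV. \<Sum>j\<in>UNIV. complex_of_real (sgn_row a) * pd a j (pd a j f) X)"

definition kappa :: "(('p::finite, 'r::finite) mat \<Rightarrow> complex) \<Rightarrow> (('p, 'r) mat \<Rightarrow> complex)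
                      \<Rightarrow> ('p, 'r) mat \<Rightarrow> complex" where
  "kappa f g X = (\<Sum>a\<in>UNIV. \<Sum>j\<in>UNIV. complex_of_real (sgn_row a) * pd a j f X * pd a j g X)"

definition orth_harm_family :: "('p::finite, 'r::finite) mat set \<Rightarrow> (('p, 'r) mat \<Rightarrow> complex) set \<Rightarrow> bool" where
  "orth_harm_family U \<Omega> \<longleftrightarrow>
     (\<forall>f\<in>\<Omega>. \<forall>X\<in>U. f differentiable (at X) \<and> (\<forall>a j. pd a j f differentiable (at X))) \<and>
     (\<forall>f\<in>\<Omega>. \<forall>X\<in>U. tau f X = 0) \<and>
     (\<forall>f\<in>\<Omega>. \<forall>g\<in>\<Omega>. \<forall>X\<in>U. kappa f g X = 0)"

definition GLp_invariant :: "('p::finite, 'r::finite) mat set \<Rightarrow> (('p, 'r) mat \<Rightarrow> complex) \<Rightarrow> bool" where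
  "GLp_invariant U f \<longleftrightarrow> (\<forall>X\<in>U. \<forall>g::real^'p^'p. invertible g \<longrightarrow> f (X ** g) = f X)"

end

theory Submission
  imports Defs
begin

text \<open>
  \<open>\<Phi>\<close> depends on \<open>X\<close> only through \<open>A = X\<^sub>0 - X\<^sub>1\<close> and \<open>W = X\<^sub>2 + i X\<^sub>3\<close>, and it is
  complex linear in \<open>W\<close>.  Invariance under translation in the direction
  \<open>E\<^sub>0 + E\<^sub>1\<close> gives \<open>\<partial>\<^sub>1 = -\<partial>\<^sub>0\<close>, so the \<open>X\<^sub>0\<close>- and \<open>X\<^sub>1\<close>-terms of \<open>\<tau>\<close> and \<open>\<kappa>\<close>,
  which enter with opposite signs, cancel.  Linearity in \<open>W\<close> gives \<open>\<partial>\<^sub>3 = i \<partial>\<^sub>2\<close> and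
  \<open>\<partial>\<^sub>2\<^sup>2 = \<partial>\<^sub>3\<^sup>2 = 0\<close>, so the \<open>X\<^sub>2\<close>- and \<open>X\<^sub>3\<close>-terms vanish or cancel by \<open>1 + i\<^sup>2 = 0\<close>.
  On \<open>U\<^sub>p\<^sub>s\<close> the matrix \<open>A\<close> is invertible: if \<open>A v = 0\<close> then \<open>X\<^sub>0 v = X\<^sub>1 v\<close> and the
  quadratic form reduces to \<open>|X\<^sub>2 v|\<^sup>2 + |X\<^sub>3 v|\<^sup>2 \<ge> 0\<close>.  Finally
  \<open>(W g)(A g)\<^sup>-\<^sup>1 = W A\<^sup>-\<^sup>1\<close>.
\<close>

section \<open>Differentiability of matrix inversion\<close>

lemma matrix_inv_right:
  fixes A :: "'a::field^'n^'n"
  assumes "invertible A"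
  shows "A ** matrix_inv A = mat 1"
  using someI_ex[OF assms[unfolded invertible_def]] by (simp add: matrix_inv_def)

lemma matrix_inv_left:
  fixes A :: "'a::field^'n^'n"
  assumes "invertible A"
  shows "matrix_inv A ** A = mat 1"
  using someI_ex[OF assms[unfolded invertible_def]] by (simp add: matrix_inv_def)

lemma matrix_inv_mult:
  fixes A B :: "'a::field^'n^'n"
  assumes "invertible A" "invertible B"
  shows "matrix_inv (A ** B) = matrix_inv B ** matrix_inv A"
proof -
  have AB: "invertible (A ** B)"
    using assms by (simp add: invertible_mult)
  have "matrix_inv (A ** B) = matrix_inv (A ** B) ** (A ** B) ** (matrix_inv B ** matrix_inv A)"
    by (simp add: matrix_mul_assoc[symmetric] assms matrix_inv_right)
         (simp add: matrix_mul_assoc assms matrix_inv_right)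
  also have "\<dots> = matrix_inv B ** matrix_inv A"
    by (simp add: AB matrix_inv_left)
  finally show ?thesis .
qed

lemma matrix_inv_entry_cramer:
  fixes M :: "'a::field^'n^'n"
  assumes "det M \<noteq> 0"
  shows "matrix_inv M $ m $ l = det (\<chi> i j. if j = m then axis l 1 $ i else M $ i $ j) / det M"
proof -
  have "invertible M"
    using assms by (simp add: invertible_det_nz)
  then have "M *v (matrix_inv M *v axis l 1) = axis l 1"
    by (simp add: matrix_vector_mul_assoc matrix_inv_right)
  then have "(matrix_inv M *v axis l 1) $ m = det (\<chi> i j. if j = m then axis l 1 $ i else M $ i $ j) / det M"
    using cramer[OF assms] by simp
  moreover have "(matrix_inv M *v axis l 1) $ m = matrix_inv M $ m $ l"
    by (simp add: matrix_vector_mult_def axis_def if_distrib cong: if_cong)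
  ultimately show ?thesis by simp
qed

lemma bounded_linear_matrix_entry: "bounded_linear (\<lambda>M::real^'n^'m. M $ i $ j)"
  using bounded_linear_compose[OF bounded_linear_vec_nth[of j] bounded_linear_vec_nth[of i]] by simp

lemma bounded_bilinear_matrix_mult:
  "bounded_bilinear ((**) :: real^'n^'m \<Rightarrow> real^'k^'n \<Rightarrow> real^'k^'m)"
  unfolding bilinear_conv_bounded_bilinear[symmetric] bilinear_def
  by (auto intro!: linearI simp: vec_eq_iff matrix_matrix_mult_def sum.distrib
      sum_distrib_left algebra_simps)

lemma continuous_on_det: "continuous_on UNIV (det :: real^'n^'n \<Rightarrow> real)"
  unfolding det_def[abs_def]
  by (intro continuous_intros linear_continuous_on bounded_linear_matrix_entry)

lemma open_invertible_matrices: "open {M :: real^'n^'n. invertible M}"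
  unfolding invertible_det_nz
  by (rule open_Collect_neq[OF continuous_on_det continuous_on_const])

lemma unitmat_entry: "unitmat a j $ b $ c = (if b = a then if c = j then 1 else 0 else 0)"
  by (simp add: unitmat_def)

lemma matrix_sum_unitmat: "M = (\<Sum>i\<in>UNIV. \<Sum>j\<in>UNIV. M $ i $ j *\<^sub>R unitmat i j)"
  for M :: "real^'n^'m"
proof -
  have "(\<Sum>i'\<in>UNIV. \<Sum>j'\<in>UNIV. M $ i' $ j' *\<^sub>R unitmat i' j' $ i $ j) = M $ i $ j" for i j
    by (simp add: unitmat_entry if_distrib[of "\<lambda>x. _ * x"] cong: if_cong) (subst sum.swap, simp)
  then show ?thesis
    by (simp add: vec_eq_iff)
qed

lemma differentiable_matrixI:
  fixes F :: "'a::real_normed_vector \<Rightarrow> real^'n^'m"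
  assumes "\<And>i j. (\<lambda>x. F x $ i $ j) differentiable (at x)"
  shows "F differentiable (at x)"
proof -
  have "(\<lambda>x. \<Sum>i\<in>UNIV. \<Sum>j\<in>UNIV. F x $ i $ j *\<^sub>R unitmat i j) differentiable (at x)"
    by (intro differentiable_sum ballI differentiable_scaleR assms differentiable_const) simp_all
  then show ?thesis
    by (simp flip: matrix_sum_unitmat)
qed

lemma differentiable_prod:
  fixes f :: "'i \<Rightarrow> 'a::real_normed_vector \<Rightarrow> 'b::real_normed_field"
  assumes "\<And>i. i \<in> I \<Longrightarrow> f i differentiable (at x)"
  shows "(\<lambda>x. \<Prod>i\<in>I. f i x) differentiable (at x)"
proof -
  from assms obtain f' where "\<And>i. i \<in> I \<Longrightarrow> (f i has_derivative f' i) (at x)"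
    unfolding differentiable_def by metis
  then show ?thesis
    unfolding differentiable_def by (blast intro: has_derivative_prod)
qed

lemma differentiable_det:
  fixes F :: "'a::real_normed_vector \<Rightarrow> real^'n^'n"
  assumes "\<And>i j. (\<lambda>x. F x $ i $ j) differentiable (at x)"
  shows "(\<lambda>x. det (F x)) differentiable (at x)"
  unfolding det_def
  by (intro differentiable_sum ballI differentiable_mult differentiable_const differentiable_prod assms)
    (simp_all add: finite_permutations)

lemma matrix_inv_differentiable:
  fixes M :: "real^'n^'n"
  assumes "invertible M"
  shows "matrix_inv differentiable (at M)"
proof (rule differentiable_matrixI)
  fix m l
  let ?cramer = "\<lambda>N::real^'n^'n. det (\<chi> i j. if j = m then axis l 1 $ i else N $ i $ j) / det N"
  have entry_differentiable: "(\<lambda>N::real^'n^'n. N $ i $ j) differentiable (at M)" for i j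
    by (rule bounded_linear_imp_differentiable[OF bounded_linear_matrix_entry])
  have "(\<lambda>N::real^'n^'n. (\<chi> i j. if j = m then axis l 1 $ i else N $ i $ j) $ i $ j) differentiable (at M)"
    for i j
    by (cases "j = m") (simp_all add: entry_differentiable)
  then have "?cramer differentiable (at M)"
    using assms unfolding invertible_det_nz
    by (intro differentiable_divide differentiable_det entry_differentiable)
  then obtain D where "(?cramer has_derivative D) (at M)"
    unfolding differentiable_def by blast
  then have "((\<lambda>N. matrix_inv N $ m $ l) has_derivative D) (at M)"
    by (rule has_derivative_transform_within_open[OF _ open_invertible_matrices])
      (use assms in \<open>auto simp: matrix_inv_entry_cramer invertible_det_nz\<close>)
  then show "(\<lambda>N. matrix_inv N $ m $ l) differentiable (at M)"
    unfolding differentiable_def by blast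
qed

lemma has_derivative_matrix_inv:
  fixes M :: "real^'n^'n"
  assumes M: "invertible M"
  shows "(matrix_inv has_derivative (\<lambda>H. - (matrix_inv M ** H ** matrix_inv M))) (at M)"
proof -
  let ?B = "matrix_inv M"
  obtain D where D: "(matrix_inv has_derivative D) (at M)"
    using matrix_inv_differentiable[OF M] unfolding differentiable_def by blast
  have "((\<lambda>N. N ** matrix_inv N) has_derivative (\<lambda>H. M ** D H + H ** ?B)) (at M)"
    by (rule bounded_bilinear.FDERIV[OF bounded_bilinear_matrix_mult has_derivative_ident D])
  moreover have "((\<lambda>N. N ** matrix_inv N) has_derivative (\<lambda>H. 0)) (at M)"
    by (rule has_derivative_transform_within_open[OF has_derivative_const open_invertible_matrices])
      (use M in \<open>auto simp: matrix_inv_right\<close>)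
  ultimately have "(\<lambda>H. M ** D H + H ** ?B) = (\<lambda>H. 0)"
    by (rule has_derivative_unique)
  then have MD: "M ** D H = - (H ** ?B)" for H
    by (simp add: fun_eq_iff eq_neg_iff_add_eq_0)
  have "D = (\<lambda>H. - (?B ** H ** ?B))"
  proof
    fix H
    have "D H = ?B ** (M ** D H)"
      by (simp add: matrix_mul_assoc matrix_inv_left[OF M])
    also have "\<dots> = - (?B ** H ** ?B)"
      by (simp add: MD bounded_bilinear.minus_right[OF bounded_bilinear_matrix_mult] matrix_mul_assoc)
    finally show "D H = - (?B ** H ** ?B)" .
  qed
  with D show ?thesis
    by simp
qed

lemma differentiable_matrix_mult:
  fixes F :: "'a::real_normed_vector \<Rightarrow> real^'n^'m" and G :: "'a \<Rightarrow> real^'k^'n"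
  assumes "F differentiable (at x)" "G differentiable (at x)"
  shows "(\<lambda>x. F x ** G x) differentiable (at x)"
  using assms unfolding differentiable_def
  by (blast intro: bounded_bilinear.FDERIV[OF bounded_bilinear_matrix_mult])

lemma has_derivative_mult_matrix_inv:
  fixes L :: "'a::real_normed_vector \<Rightarrow> real^'n^'m" and A :: "'a \<Rightarrow> real^'n^'n"
  assumes "bounded_linear L" "bounded_linear A" "invertible (A X)"
  shows "((\<lambda>Y. L Y ** matrix_inv (A Y)) has_derivative
           (\<lambda>H. L H ** matrix_inv (A X) - L X ** (matrix_inv (A X) ** A H ** matrix_inv (A X)))) (at X)"
proof -
  have "((\<lambda>Y. matrix_inv (A Y)) has_derivative (\<lambda>H. - (matrix_inv (A X) ** A H ** matrix_inv (A X)))) (at X)"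
    using has_derivative_compose[OF bounded_linear.has_derivative[OF assms(2) has_derivative_ident]
        has_derivative_matrix_inv[OF assms(3)]] by simp
  from bounded_bilinear.FDERIV[OF bounded_bilinear_matrix_mult
      bounded_linear.has_derivative[OF assms(1) has_derivative_ident] this]
  show ?thesis
    by (simp add: bounded_bilinear.minus_right[OF bounded_bilinear_matrix_mult] add.commute)
qed

lemma differentiable_mult_matrix_inv_derivative:
  fixes L :: "'a::real_normed_vector \<Rightarrow> real^'n^'m" and A :: "'a \<Rightarrow> real^'n^'n"
  assumes "bounded_linear L" "bounded_linear A" "invertible (A X)"
  shows "(\<lambda>Y. L H ** matrix_inv (A Y) - L Y ** (matrix_inv (A Y) ** A H ** matrix_inv (A Y)))
           differentiable (at X)"
proof -
  have "(\<lambda>Y. matrix_inv (A Y)) differentiable (at X)"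
    using differentiable_chain_at[OF bounded_linear_imp_differentiable[OF assms(2)]
        matrix_inv_differentiable[OF assms(3)]] by (simp add: o_def)
  then show ?thesis
    by (intro differentiable_diff differentiable_matrix_mult differentiable_const
        bounded_linear_imp_differentiable[OF assms(1)])
qed

section \<open>Partial derivatives along coordinate lines\<close>

lemma has_vector_derivative_along_line:
  assumes "(f has_derivative f') (at X)"
  shows "((\<lambda>t. f (X + t *\<^sub>R E)) has_vector_derivative f' E) (at 0)"
proof -
  have "((\<lambda>t. f (X + t *\<^sub>R E)) has_derivative (\<lambda>t. f' (t *\<^sub>R E))) (at 0)"
    by (rule has_derivative_compose[of "\<lambda>t. X + t *\<^sub>R E"]) (auto intro!: derivative_eq_intros assms)
  then show ?thesis
    by (simp add: has_vector_derivative_def linear_cmul[OF has_derivative_linear[OF assms]])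
qed

lemma pd_eq_derivative:
  assumes "(f has_derivative f') (at X)"
  shows "pd a j f X = f' (unitmat a j)"
  unfolding pd_def by (rule vector_derivative_at[OF has_vector_derivative_along_line[OF assms]])

lemma has_derivative_invariant_direction:
  assumes "(f has_derivative f') (at X)" and "\<And>t. f (X + t *\<^sub>R d) = f X"
  shows "f' d = 0"
proof -
  have "((\<lambda>t. f (X + t *\<^sub>R d)) has_vector_derivative f' d) (at 0)"
    by (rule has_vector_derivative_along_line[OF assms(1)])
  moreover have "((\<lambda>t. f (X + t *\<^sub>R d)) has_vector_derivative 0) (at 0)"
    by (simp add: assms(2))
  ultimately show ?thesis
    using vector_derivative_unique_at by blast
qed

lemma pd_translation_invariant:
  assumes "\<And>Y t. f (Y + t *\<^sub>R d) = f Y"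
  shows "pd a j f (X + t *\<^sub>R d) = pd a j f X"
proof -
  have "f (X + t *\<^sub>R d + s *\<^sub>R unitmat a j) = f (X + s *\<^sub>R unitmat a j)" for s
    using assms[of "X + s *\<^sub>R unitmat a j" t] by (simp add: algebra_simps)
  then show ?thesis
    by (simp add: pd_def)
qed

lemma pd_affine_line:
  assumes "\<And>t. f (X + t *\<^sub>R unitmat a j) = f X + t *\<^sub>R c"
  shows "pd a j f X = c"
proof -
  have "((\<lambda>t. f X + t *\<^sub>R c) has_vector_derivative c) (at 0)"
    by (auto intro!: derivative_eq_intros)
  then show ?thesis
    by (simp add: pd_def assms vector_derivative_at)
qed

lemma pd_pd_affine_direction:
  assumes "\<And>Y t. f (Y + t *\<^sub>R unitmat a j) = f Y + t *\<^sub>R c Y"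
    and "\<And>Y t. c (Y + t *\<^sub>R unitmat a j) = c Y"
  shows "pd a j f = c" and "pd a j (pd a j f) X = 0"
proof -
  show pd_f: "pd a j f = c"
    using pd_affine_line[OF assms(1)] by blast
  show "pd a j (pd a j f) X = 0"
    unfolding pd_f by (rule pd_affine_line) (simp add: assms(2))
qed

lemma pd_eq_neg_if_invariant:
  assumes "\<And>Y t. f (Y + t *\<^sub>R (unitmat a j + unitmat b j')) = f Y"
    and "f differentiable (at X)"
  shows "pd b j' f X = - pd a j f X"
proof -
  obtain f' where f': "(f has_derivative f') (at X)"
    using assms(2) unfolding differentiable_def by blast
  have "f' (unitmat a j + unitmat b j') = 0"
    by (rule has_derivative_invariant_direction[OF f']) (rule assms(1))
  then have "f' (unitmat a j) + f' (unitmat b j') = 0"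
    by (simp add: linear_add[OF has_derivative_linear[OF f']])
  then show ?thesis
    by (simp add: pd_eq_derivative[OF f'] eq_neg_iff_add_eq_0 add.commute)
qed

lemma pd_pd_eq_if_invariant:
  assumes invariant: "\<And>Y t. f (Y + t *\<^sub>R (unitmat a j + unitmat b j')) = f Y"
    and "open V" "X \<in> V" "\<And>Y. Y \<in> V \<Longrightarrow> f differentiable (at Y)"
    and "pd a j f differentiable (at X)"
  shows "pd b j' (pd b j' f) X = pd a j (pd a j f) X"
proof -
  obtain D where D: "(pd a j f has_derivative D) (at X)"
    using assms(5) unfolding differentiable_def by blast
  have "(pd b j' f has_derivative (\<lambda>h. - D h)) (at X)"
    by (rule has_derivative_transform_within_open[OF has_derivative_minus[OF D] assms(2,3)])
      (simp add: pd_eq_neg_if_invariant[OF invariant assms(4)])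
  then have "pd b j' (pd b j' f) X = - pd b j' (pd a j f) X"
    by (simp add: pd_eq_derivative[OF D] pd_eq_derivative)
  also have "\<dots> = pd a j (pd a j f) X"
  proof -
    have "pd a j f (Y + t *\<^sub>R (unitmat a j + unitmat b j')) = pd a j f Y" for Y t
      by (rule pd_translation_invariant) (rule invariant)
    from pd_eq_neg_if_invariant[OF this assms(5)] show ?thesis by simp
  qed
  finally show ?thesis .
qed

lemma pd_differentiable:
  assumes "open V" "X \<in> V" "\<And>Y. Y \<in> V \<Longrightarrow> (f has_derivative f' Y) (at Y)"
    and "(\<lambda>Y. f' Y (unitmat a j)) differentiable (at X)"
  shows "pd a j f differentiable (at X)"
proof -
  obtain D where D: "((\<lambda>Y. f' Y (unitmat a j)) has_derivative D) (at X)"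
    using assms(4) unfolding differentiable_def by blast
  have "(pd a j f has_derivative D) (at X)"
    by (rule has_derivative_transform_within_open[OF D assms(1,2)])
      (simp add: pd_eq_derivative[OF assms(3)])
  then show ?thesis
    unfolding differentiable_def by blast
qed

section \<open>The map \<open>\<Phi>\<close>\<close>

definition Amat :: "('p::finite, 'r::finite) mat \<Rightarrow> real^'p^'p" where
  "Amat X = blk0 X - blk1 X"

lemma bounded_linear_blocks:
  "bounded_linear (blk2 :: ('p::finite, 'r::finite) mat \<Rightarrow> _)"
  "bounded_linear (blk3 :: ('p::finite, 'r::finite) mat \<Rightarrow> _)"
  "bounded_linear (Amat :: ('p::finite, 'r::finite) mat \<Rightarrow> _)"
  unfolding linear_conv_bounded_linear[symmetric]
  by (auto intro!: linearI simp: Amat_def blk0_def blk1_def blk2_def blk3_def vec_eq_iff algebra_simps)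

lemma Phi_eq_blocks:
  "Phi X k l = of_real ((blk2 X ** matrix_inv (Amat X)) $ k $ l)
             + \<i> * of_real ((blk3 X ** matrix_inv (Amat X)) $ k $ l)"
  unfolding Phi_def Let_def Amat_def
  by (simp add: matrix_matrix_mult_def sum_distrib_left distrib_right sum.distrib mult.assoc)

lemma quadratic_form_transpose_mult:
  fixes A :: "real^'n^'m"
  shows "v \<bullet> ((transpose A ** A) *v v) = (A *v v) \<bullet> (A *v v)"
  by (metis dot_lmul_matrix matrix_vector_mul_assoc vector_transpose_matrix)

lemma invertible_Amat:
  assumes "X \<in> U_ps"
  shows "invertible (Amat X)"
  unfolding invertible_left_inverse matrix_left_invertible_ker
proof (intro allI impI)
  fix v assume "Amat X *v v = 0"
  then have X0_eq_X1: "blk0 X *v v = blk1 X *v v"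
    by (simp add: Amat_def matrix_vector_mult_diff_rdistrib)
  let ?Q = "- (transpose (blk0 X) ** blk0 X) + transpose (blk1 X) ** blk1 X
            + transpose (blk2 X) ** blk2 X + transpose (blk3 X) ** blk3 X"
  have "v \<bullet> (?Q *v v) = (blk2 X *v v) \<bullet> (blk2 X *v v) + (blk3 X *v v) \<bullet> (blk3 X *v v)"
    by (simp add: matrix_vector_mult_add_rdistrib matrix_vector_mult_diff_rdistrib inner_add_right
        inner_diff_right quadratic_form_transpose_mult X0_eq_X1)
  then have "\<not> v \<bullet> (?Q *v v) < 0"
    by (simp add: not_less)
  with assms show "v = 0"
    unfolding U_ps_def neg_def_def by blast
qed

lemma blocks_matrix_mult:
  fixes X :: "('p::finite, 'r::finite) mat"
  shows "blk2 (X ** g) = blk2 X ** g" "blk3 (X ** g) = blk3 X ** g" "Amat (X ** g) = Amat X ** g"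
  by (simp_all add: Amat_def blk0_def blk1_def blk2_def blk3_def matrix_matrix_mult_def vec_eq_iff
      sum_subtractf left_diff_distrib)

lemma Phi_matrix_mult_invertible:
  fixes X :: "('p::finite, 'r::finite) mat" and g :: "real^'p^'p"
  assumes "invertible (Amat X)" "invertible g"
  shows "Phi (X ** g) k l = Phi X k l"
proof -
  have "L ** g ** matrix_inv (Amat X ** g) = L ** matrix_inv (Amat X)" for L :: "real^'p^'r"
    by (simp add: matrix_inv_mult assms matrix_mul_assoc matrix_inv_right flip: matrix_mul_assoc[of L])
  then show ?thesis
    by (simp add: Phi_eq_blocks blocks_matrix_mult)
qed

lemma open_invertible_Amat: "open {X :: ('p::finite, 'r::finite) mat. invertible (Amat X)}"
  using continuous_open_vimage[OF open_invertible_matrices linear_continuous_at[OF bounded_linear_blocks(3)]]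
  by (simp add: vimage_def)

lemma Phi_differentiable:
  fixes X :: "('p::finite, 'r::finite) mat"
  assumes "invertible (Amat X)"
  shows "(\<lambda>Y. Phi Y k l) differentiable (at X)"
    and "pd a j (\<lambda>Y. Phi Y k l) differentiable (at X)"
proof -
  define V :: "('p, 'r) mat set" where "V = {Y. invertible (Amat Y)}"
  define entry :: "real^'p^'r \<Rightarrow> complex" where "entry M = of_real (M $ k $ l)" for M
  define D where "D L Y H = L H ** matrix_inv (Amat Y) - L Y ** (matrix_inv (Amat Y) ** Amat H ** matrix_inv (Amat Y))"
    for L :: "('p, 'r) mat \<Rightarrow> real^'p^'r" and Y H
  have entry: "bounded_linear entry"
    unfolding entry_def by (intro bounded_linear_compose[OF bounded_linear_of_real] bounded_linear_matrix_entry)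
  have Phi_entry: "Phi Y k l = entry (blk2 Y ** matrix_inv (Amat Y)) + \<i> * entry (blk3 Y ** matrix_inv (Amat Y))"
    for Y
    by (simp add: Phi_eq_blocks entry_def)
  have derivative: "((\<lambda>Y. Phi Y k l) has_derivative (\<lambda>H. entry (D blk2 Y H) + \<i> * entry (D blk3 Y H))) (at Y)"
    if "Y \<in> V" for Y
    unfolding Phi_entry D_def
    using that unfolding V_def
    by (intro has_derivative_add has_derivative_mult_right bounded_linear.has_derivative[OF entry]
        has_derivative_mult_matrix_inv bounded_linear_blocks) auto
  then show "(\<lambda>Y. Phi Y k l) differentiable (at X)"
    using assms unfolding differentiable_def V_def by blast
  have "(\<lambda>Y. entry (D blk2 Y H) + \<i> * entry (D blk3 Y H)) differentiable (at X)" for H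
    unfolding D_def
    by (intro differentiable_add differentiable_mult differentiable_const
        differentiable_chain_at[OF _ bounded_linear_imp_differentiable[OF entry], unfolded o_def]
        differentiable_mult_matrix_inv_derivative bounded_linear_blocks assms)
  with open_invertible_Amat derivative show "pd a j (\<lambda>Y. Phi Y k l) differentiable (at X)"
    by (intro pd_differentiable[of V]) (auto simp: V_def assms)
qed

lemma unitmat_mult_entry: "(unitmat m j ** B) $ k $ l = (if k = m then B $ j $ l else 0)"
  by (simp add: matrix_matrix_mult_def unitmat_entry if_distrib[of "\<lambda>x. x * _"] cong: if_cong)

lemma Phi_translate_X0_X1:
  fixes Y :: "('p::finite, 'r::finite) mat"
  shows "Phi (Y + t *\<^sub>R (unitmat (Inl (Inl i)) j + unitmat (Inl (Inr i)) j)) k l = Phi Y k l"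
proof -
  let ?Y' = "Y + t *\<^sub>R (unitmat (Inl (Inl i)) j + unitmat (Inl (Inr i)) j)"
  have "Amat ?Y' = Amat Y" "blk2 ?Y' = blk2 Y" "blk3 ?Y' = blk3 Y"
    by (simp_all add: Amat_def blk0_def blk1_def blk2_def blk3_def unitmat_def vec_eq_iff)
  then show ?thesis
    by (simp add: Phi_eq_blocks)
qed

lemma Phi_translate_X2:
  fixes Y :: "('p::finite, 'r::finite) mat"
  shows "Phi (Y + t *\<^sub>R unitmat (Inr (Inl m)) j) k l
       = Phi Y k l + t *\<^sub>R (if k = m then of_real (matrix_inv (Amat Y) $ j $ l) else 0)"
proof -
  let ?Y' = "Y + t *\<^sub>R unitmat (Inr (Inl m)) j"
  have "Amat ?Y' = Amat Y" "blk2 ?Y' = blk2 Y + t *\<^sub>R unitmat m j" "blk3 ?Y' = blk3 Y"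
    by (simp_all add: Amat_def blk0_def blk1_def blk2_def blk3_def unitmat_def vec_eq_iff)
  then show ?thesis
    by (simp add: Phi_eq_blocks bounded_bilinear.add_left[OF bounded_bilinear_matrix_mult]
        bounded_bilinear.scaleR_left[OF bounded_bilinear_matrix_mult] unitmat_mult_entry)
      (simp add: scaleR_conv_of_real algebra_simps)
qed

lemma Phi_translate_X3:
  fixes Y :: "('p::finite, 'r::finite) mat"
  shows "Phi (Y + t *\<^sub>R unitmat (Inr (Inr m)) j) k l
       = Phi Y k l + t *\<^sub>R (if k = m then \<i> * of_real (matrix_inv (Amat Y) $ j $ l) else 0)"
proof -
  let ?Y' = "Y + t *\<^sub>R unitmat (Inr (Inr m)) j"
  have "Amat ?Y' = Amat Y" "blk2 ?Y' = blk2 Y" "blk3 ?Y' = blk3 Y + t *\<^sub>R unitmat m j"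
    by (simp_all add: Amat_def blk0_def blk1_def blk2_def blk3_def unitmat_def vec_eq_iff)
  then show ?thesis
    by (simp add: Phi_eq_blocks bounded_bilinear.add_left[OF bounded_bilinear_matrix_mult]
        bounded_bilinear.scaleR_left[OF bounded_bilinear_matrix_mult] unitmat_mult_entry)
      (simp add: scaleR_conv_of_real algebra_simps)
qed

lemma Amat_translate_X2_X3:
  fixes Y :: "('p::finite, 'r::finite) mat"
  shows "Amat (Y + t *\<^sub>R unitmat (Inr m) j) = Amat Y"
  by (simp add: Amat_def blk0_def blk1_def unitmat_def vec_eq_iff)

lemma pd_Phi_X2:
  "pd (Inr (Inl m)) j (\<lambda>Y. Phi Y k l) = (\<lambda>Y. if k = m then of_real (matrix_inv (Amat Y) $ j $ l) else 0)"
  "pd (Inr (Inl m)) j (pd (Inr (Inl m)) j (\<lambda>Y. Phi Y k l)) X = 0"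
  by (rule pd_pd_affine_direction, rule Phi_translate_X2, simp add: Amat_translate_X2_X3)+

lemma pd_Phi_X3:
  "pd (Inr (Inr m)) j (\<lambda>Y. Phi Y k l) = (\<lambda>Y. if k = m then \<i> * of_real (matrix_inv (Amat Y) $ j $ l) else 0)"
  "pd (Inr (Inr m)) j (pd (Inr (Inr m)) j (\<lambda>Y. Phi Y k l)) X = 0"
  by (rule pd_pd_affine_direction, rule Phi_translate_X3, simp add: Amat_translate_X2_X3)+

lemma pd_Phi_X3_eq_i_pd_Phi_X2:
  "pd (Inr (Inr m)) j (\<lambda>Y. Phi Y k l) X = \<i> * pd (Inr (Inl m)) j (\<lambda>Y. Phi Y k l) X"
  by (simp add: pd_Phi_X2(1) pd_Phi_X3(1))

lemma pd_Phi_X1: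
  fixes X :: "('p::finite, 'r::finite) mat"
  assumes "invertible (Amat X)"
  shows "pd (Inl (Inr i)) j (\<lambda>Y. Phi Y k l) X = - pd (Inl (Inl i)) j (\<lambda>Y. Phi Y k l) X"
    and "pd (Inl (Inr i)) j (pd (Inl (Inr i)) j (\<lambda>Y. Phi Y k l)) X
       = pd (Inl (Inl i)) j (pd (Inl (Inl i)) j (\<lambda>Y. Phi Y k l)) X"
proof -
  show "pd (Inl (Inr i)) j (\<lambda>Y. Phi Y k l) X = - pd (Inl (Inl i)) j (\<lambda>Y. Phi Y k l) X"
    by (rule pd_eq_neg_if_invariant[OF Phi_translate_X0_X1 Phi_differentiable(1)[OF assms]])
  show "pd (Inl (Inr i)) j (pd (Inl (Inr i)) j (\<lambda>Y. Phi Y k l)) X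
       = pd (Inl (Inl i)) j (pd (Inl (Inl i)) j (\<lambda>Y. Phi Y k l)) X"
    by (rule pd_pd_eq_if_invariant[OF _ open_invertible_Amat])
      (use assms Phi_translate_X0_X1 Phi_differentiable in auto)
qed

lemma sum_rowidx:
  fixes h :: "('p::finite, 'r::finite) rowidx \<Rightarrow> 'b::comm_monoid_add"
  shows "(\<Sum>a\<in>UNIV. h a) = (\<Sum>i\<in>UNIV. h (Inl (Inl i))) + (\<Sum>i\<in>UNIV. h (Inl (Inr i)))
      + (\<Sum>m\<in>UNIV. h (Inr (Inl m))) + (\<Sum>m\<in>UNIV. h (Inr (Inr m)))"
  by (simp add: UNIV_Plus_UNIV[symmetric] sum.Plus del: UNIV_Plus_UNIV add: o_def add.assoc)

lemma tau_Phi: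
  fixes X :: "('p::finite, 'r::finite) mat"
  assumes "invertible (Amat X)"
  shows "tau (\<lambda>Y. Phi Y k l) X = 0"
  unfolding tau_def
  by (subst sum_rowidx) (simp add: sgn_row_def pd_Phi_X1(2)[OF assms] pd_Phi_X2(2) pd_Phi_X3(2) sum_negf)

lemma kappa_Phi:
  fixes X :: "('p::finite, 'r::finite) mat"
  assumes "invertible (Amat X)"
  shows "kappa (\<lambda>Y. Phi Y k l) (\<lambda>Y. Phi Y k' l') X = 0"
  unfolding kappa_def
  by (subst sum_rowidx) (simp add: sgn_row_def pd_Phi_X1(1)[OF assms] pd_Phi_X3_eq_i_pd_Phi_X2 sum_negf
      algebra_simps)

theorem proposition5p2:
  fixes \<Omega> :: "(('p::finite, 'r::finite) mat \<Rightarrow> complex) set"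
  assumes "\<Omega> = {(\<lambda>X. Phi X k l) | k l. True}"
  shows "orth_harm_family (U_ps :: ('p, 'r) mat set) \<Omega> \<and> (\<forall>f\<in>\<Omega>. GLp_invariant U_ps f)"
  unfolding orth_harm_family_def GLp_invariant_def assms
  using invertible_Amat Phi_differentiable tau_Phi kappa_Phi Phi_matrix_mult_invertible
  by fastforce

end
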